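(* Let $n\ge1$ and $m\in\mathbb{N}$. Let $\mathcal{Q}_m=\bigoplus_{t=0}^m H_t\subseteq H^2(\mathbb{T}^n)$ and let $p\in H_m$ be a homogeneous polynomial of degree $m$ with $\|p\|_2=1$. Then the operator $S_p=P_{\mathcal{Q}_m}T_p|_{\mathcal{Q}_m}$ admits a lift, i.e. there exists $\varphi\in\mathcal{S}(\mathbb{D}^n)$ with $S_p=P_{\mathcal{Q}_m}T_\varphi|_{\mathcal{Q}_m}$, if and only if $p$ is a unimodular constant multiple of a monomial.
   Context: $H_t\subseteq\mathbb{C}[z_1,\dots,z_n]$ is the space of homogeneous polynomials of degree $t$, viewed as a subspace of the Hardy space $H^2(\mathbb{T}^n)$ (closed subspace of $L^2(\mathbb{T}^n,\mu)$, $\mu$ normalized Lebesgue measure, of functions with Fourier coefficients supported in $\mathbb{Z}_+^n$); thus $\mathcal{Q}_m$ is the space of polynomials of degree at most $m$, which is invariant under all $T_{z_i}^*$. $\|\cdot\|_2$ is the $H^2$ norm, $T_\varphi f=\varphi f$, $P_{\mathcal{Q}_m}$ the orthogonal projection onto $\mathcal{Q}_m$, and $\mathcal{S}(\mathbb{D}^n)$ the closed unit ball of $H^\infty(\mathbb{D}^n)$ (sup norm). *)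

theory Defs
  imports "HOL-Analysis.Analysis"
begin

(* Multi-indices in Z_+^n are functions 'n => nat, with 'n a finite (nonempty) index type,
   so n = CARD('n) >= 1.  An element of H^2(T^n) (resp. a power series on D^n) is
   represented by its family of Fourier/Taylor coefficients ('n => nat) => complex. *)

type_synonym 'n mindex = "'n \<Rightarrow> nat"

definition mdeg :: "'n::finite mindex \<Rightarrow> nat" where
  "mdeg \<alpha> = (\<Sum>i\<in>UNIV. \<alpha> i)"

definition mmonom :: "('n::finite \<Rightarrow> complex) \<Rightarrow> 'n mindex \<Rightarrow> complex" where
  "mmonom z \<alpha> = (\<Prod>i\<in>UNIV. z i ^ \<alpha> i)"

definition polydisc :: "('n::finite \<Rightarrow> complex) set" where
  "polydisc = {z. \<forall>i. norm (z i) < 1}"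

(* Schur class S(D^n): coefficient families of holomorphic functions on D^n
   (power series converging (absolutely) at every point of D^n) with sup norm <= 1 *)
definition schur_class :: "('n::finite mindex \<Rightarrow> complex) \<Rightarrow> bool" where
  "schur_class c \<longleftrightarrow>
     (\<forall>z\<in>polydisc. (\<lambda>\<alpha>. norm (c \<alpha> * mmonom z \<alpha>)) summable_on UNIV
                   \<and> norm (infsum (\<lambda>\<alpha>. c \<alpha> * mmonom z \<alpha>) UNIV) \<le> 1)"

definition homog :: "nat \<Rightarrow> ('n::finite mindex \<Rightarrow> complex) set" where
  "homog t = {p. \<forall>\<alpha>. p \<alpha> \<noteq> 0 \<longrightarrow> mdeg \<alpha> = t}"

definition Qspace :: "nat \<Rightarrow> ('n::finite mindex \<Rightarrow> complex) set" where
  "Qspace m = {q. \<forall>\<alpha>. q \<alpha> \<noteq> 0 \<longrightarrow> mdeg \<alpha> \<le> m}"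

definition h2norm :: "('n::finite mindex \<Rightarrow> complex) \<Rightarrow> real" where
  "h2norm f = sqrt (infsum (\<lambda>\<alpha>. (cmod (f \<alpha>))\<^sup>2) UNIV)"

(* Fourier coefficients of the product phi * q (Cauchy product of coefficients);
   T_phi f = phi f *)
definition mult_coeffs ::
  "('n::finite mindex \<Rightarrow> complex) \<Rightarrow> ('n mindex \<Rightarrow> complex) \<Rightarrow> 'n mindex \<Rightarrow> complex" where
  "mult_coeffs c q \<beta> = (\<Sum>\<alpha>\<in>{\<alpha>. \<forall>i. \<alpha> i \<le> \<beta> i}. c \<alpha> * q (\<beta> - \<alpha>))"

definition proj_Q :: "nat \<Rightarrow> ('n::finite mindex \<Rightarrow> complex) \<Rightarrow> 'n mindex \<Rightarrow> complex" where
  "proj_Q m f = (\<lambda>\<beta>. if mdeg \<beta> \<le> m then f \<beta> else 0)"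

definition compress :: "nat \<Rightarrow> ('n::finite mindex \<Rightarrow> complex) \<Rightarrow> ('n mindex \<Rightarrow> complex) \<Rightarrow> 'n mindex \<Rightarrow> complex" where
  "compress m c q = proj_Q m (mult_coeffs c q)"

definition monomial_coeffs :: "'n::finite mindex \<Rightarrow> 'n mindex \<Rightarrow> complex" where
  "monomial_coeffs \<alpha> = (\<lambda>\<beta>. if \<beta> = \<alpha> then 1 else 0)"

end

(*
  If a Schur-class function phi lifts S_p, testing the compressions on the constant 1 shows that
  phi and p have the same Taylor coefficients up to degree m, so p is the degree-m homogeneous
  part of phi. Averaging zeta^(-m) phi(zeta r w) over the N-th roots of unity zeta isolates the
  terms of degree congruent to m mod N; letting N grow and r tend to 1 gives |p| <= 1 on the
  torus. Together with ||p||_2 = 1 this forces |p| = 1 on the torus. A Kronecker substitution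
  z_i = zeta^(B^(k i)) turns p into a one-variable trigonometric polynomial with distinct
  frequencies; since its modulus is constant, its autocorrelation at the lag between the largest
  and the smallest frequency vanishes, yet that autocorrelation is the product of the two extreme
  coefficients. Hence p has a single term. Conversely, u z^alpha with |u| = 1 is its own lift.
  Throughout, integrals over the torus are replaced by finite averages over roots of unity.
*)

theory Submission
  imports Defs
begin

section \<open>Roots of unity\<close>

definition unit_root :: "nat \<Rightarrow> int \<Rightarrow> complex" where
  "unit_root N s = exp (2 * of_real pi * \<i> * of_int s / of_nat N)"

lemma unit_root_0 [simp]: "unit_root N 0 = 1"
  by (simp add: unit_root_def)

lemma unit_root_add: "unit_root N (a + b) = unit_root N a * unit_root N b"
  unfolding unit_root_def by (simp add: exp_add[symmetric] ring_distribs add_divide_distrib)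

lemma norm_unit_root [simp]: "cmod (unit_root N a) = 1"
  unfolding unit_root_def by (simp add: norm_exp_eq_Re)

lemma cnj_unit_root: "cnj (unit_root N a) = unit_root N (- a)"
  unfolding unit_root_def exp_cnj by simp

lemma unit_root_power: "unit_root N a ^ k = unit_root N (int k * a)"
  by (induction k) (simp_all add: unit_root_add[symmetric] algebra_simps)

lemma prod_unit_root: "finite I \<Longrightarrow> (\<Prod>i\<in>I. unit_root N (f i)) = unit_root N (\<Sum>i\<in>I. f i)"
  by (induction I rule: finite_induct) (simp_all add: unit_root_add)

lemma unit_root_eq_1_iff:
  assumes "N > 0"
  shows "unit_root N s = 1 \<longleftrightarrow> int N dvd s"
proof -
  have "unit_root N s = 1 \<longleftrightarrow> (\<exists>n::int. 2 * pi * of_int s / real N = of_int (2 * n) * pi)"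
    unfolding unit_root_def exp_eq_1 using assms by (simp add: Re_divide Im_divide power2_eq_square)
  also have "\<dots> \<longleftrightarrow> (\<exists>n::int. real_of_int s = of_int n * real N)"
    using assms pi_gt_zero by (simp add: divide_simps)
  also have "\<dots> \<longleftrightarrow> int N dvd s"
    by (metis dvd_def mult.commute of_int_eq_iff of_int_mult of_int_of_nat_eq)
  finally show ?thesis .
qed

lemma sum_unit_root:
  assumes "N > 0"
  shows "(\<Sum>j<N. unit_root N (int j * s)) = (if int N dvd s then of_nat N else 0)"
proof -
  define x where "x = unit_root N s"
  have "x ^ N = 1"
    unfolding x_def unit_root_power by (simp add: unit_root_eq_1_iff[OF assms])
  moreover have "(\<Sum>j<N. unit_root N (int j * s)) = (\<Sum>j<N. x ^ j)"
    by (simp add: x_def unit_root_power)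
  ultimately show ?thesis
    using unit_root_eq_1_iff[OF assms, of s] by (simp add: sum_gp_strict x_def)
qed

lemma int_dvd_small_iff: "\<bar>x\<bar> < int N \<Longrightarrow> int N dvd x \<longleftrightarrow> x = 0"
  using dvd_imp_le_int[of x "int N"] by auto

section \<open>Base-\<open>B\<close> expansions and multi-indices\<close>

lemma sum_base_digits_less: "(\<Sum>s<t. (B - 1) * B ^ s) < (B::nat) ^ t" if "B > 0"
proof (induction t)
  case (Suc t)
  then have "(\<Sum>s<Suc t. (B - 1) * B ^ s) < B ^ t + (B - 1) * B ^ t" by simp
  also have "\<dots> = B ^ Suc t" using that by (cases B) simp_all
  finally show ?case .
qed simp

lemma sum_base_power_less:
  fixes k \<alpha> :: "'a \<Rightarrow> nat"
  assumes B: "B > 0" and "finite J" "inj_on k J" "\<forall>i\<in>J. \<alpha> i < B" "\<forall>i\<in>J. k i < t"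
  shows "(\<Sum>i\<in>J. \<alpha> i * B ^ k i) < B ^ t"
proof -
  have "(\<Sum>i\<in>J. \<alpha> i * B ^ k i) \<le> (\<Sum>i\<in>J. (B - 1) * B ^ k i)"
    using assms(4) by (intro sum_mono mult_right_mono) fastforce+
  also have "\<dots> = (\<Sum>s\<in>k ` J. (B - 1) * B ^ s)"
    by (simp add: sum.reindex[OF assms(3)])
  also have "\<dots> \<le> (\<Sum>s<t. (B - 1) * B ^ s)"
    using assms(2,5) by (intro sum_mono2) auto
  also have "\<dots> < B ^ t" by (rule sum_base_digits_less[OF B])
  finally show ?thesis .
qed

lemma sum_base_power_mod:
  fixes k \<alpha> :: "'a \<Rightarrow> nat"
  assumes "B > 0" "finite I" "inj_on k I" "\<forall>i\<in>I. \<alpha> i < B"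
  shows "(\<Sum>i\<in>I. \<alpha> i * B ^ k i) mod B ^ t = (\<Sum>i\<in>{i\<in>I. k i < t}. \<alpha> i * B ^ k i)"
proof -
  let ?low = "{i\<in>I. k i < t}"
  have "(\<Sum>i\<in>I. \<alpha> i * B ^ k i) = (\<Sum>i\<in>I - ?low. \<alpha> i * B ^ k i) + (\<Sum>i\<in>?low. \<alpha> i * B ^ k i)"
    using assms(2) by (intro sum.subset_diff) auto
  moreover have "B ^ t dvd (\<Sum>i\<in>I - ?low. \<alpha> i * B ^ k i)"
    by (intro dvd_sum dvd_mult le_imp_power_dvd) auto
  moreover have "(\<Sum>i\<in>?low. \<alpha> i * B ^ k i) < B ^ t"
    using assms by (intro sum_base_power_less) (auto intro: inj_on_subset)
  ultimately show ?thesis by (auto elim!: dvdE)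
qed

lemma base_expansion_inj:
  fixes k \<alpha> \<gamma> :: "'a \<Rightarrow> nat"
  assumes "finite I" "inj_on k I" "\<forall>i\<in>I. \<alpha> i < B" "\<forall>i\<in>I. \<gamma> i < B"
    and eq: "(\<Sum>i\<in>I. \<alpha> i * B ^ k i) = (\<Sum>i\<in>I. \<gamma> i * B ^ k i)" and "i \<in> I"
  shows "\<alpha> i = \<gamma> i"
proof -
  have B: "B > 0" using assms(3,6) by fastforce
  have split: "{j\<in>I. k j < Suc (k i)} = insert i {j\<in>I. k j < k i}"
    using assms(2,6) by (auto simp: inj_on_eq_iff less_Suc_eq)
  have "\<delta> i * B ^ k i = (\<Sum>j\<in>I. \<delta> j * B ^ k j) mod B ^ Suc (k i) - (\<Sum>j\<in>I. \<delta> j * B ^ k j) mod B ^ k i"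
    if "\<forall>j\<in>I. \<delta> j < B" for \<delta> :: "'a \<Rightarrow> nat"
    unfolding sum_base_power_mod[OF B assms(1,2) that] split using assms(1) by simp
  then have "\<alpha> i * B ^ k i = \<gamma> i * B ^ k i"
    using assms(3,4) eq by simp
  then show ?thesis using B by simp
qed

lemma coord_le_mdeg: "\<beta> i \<le> mdeg (\<beta> :: 'n::finite mindex)"
  unfolding mdeg_def by (rule member_le_sum) auto

lemma finite_mdeg_less: "finite {\<beta> :: 'n::finite mindex. mdeg \<beta> < N}"
proof (rule finite_subset)
  show "{\<beta> :: 'n mindex. mdeg \<beta> < N} \<subseteq> PiE UNIV (\<lambda>_. {..<N})"
    using coord_le_mdeg order.strict_trans1 by (fastforce simp: PiE_UNIV_domain)
qed (simp add: finite_PiE)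

lemma finite_mdeg_eq: "finite {\<beta> :: 'n::finite mindex. mdeg \<beta> = m}"
  by (rule finite_subset[OF _ finite_mdeg_less[of "Suc m"]]) auto

lemma mmonom_scale: "mmonom (\<lambda>i. c * w i) \<beta> = c ^ mdeg \<beta> * mmonom w \<beta>"
  unfolding mmonom_def mdeg_def by (simp add: power_mult_distrib prod.distrib power_sum)

lemma norm_mmonom_polydisc_le: "z \<in> polydisc \<Longrightarrow> cmod (mmonom z \<beta>) \<le> 1"
  unfolding mmonom_def prod_norm[symmetric] norm_power polydisc_def
  by (intro prod_le_1) (simp add: less_imp_le power_le_one)

lemma mmonom_unit_root:
  "mmonom (\<lambda>i. unit_root N (int j * int (b i))) \<beta> = unit_root N (int j * int (\<Sum>i\<in>UNIV. \<beta> i * b i))"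
  unfolding mmonom_def unit_root_power prod_unit_root[OF finite]
  by (simp add: sum_distrib_left mult_ac)

section \<open>Trigonometric sums bounded by one\<close>

lemma sum_unit_root_autocorrelation:
  fixes c :: "'a \<Rightarrow> complex" and L :: "'a \<Rightarrow> int" and A :: "'a set"
  assumes "N > 0"
  defines "P \<equiv> \<lambda>j. \<Sum>x\<in>A. c x * unit_root N (int j * L x)"
  shows "(\<Sum>j<N. P j * cnj (P j) * unit_root N (int j * e)) =
         of_nat N * (\<Sum>x\<in>A. \<Sum>y\<in>A. if int N dvd L x - L y + e then c x * cnj (c y) else 0)"
proof -
  have summand: "(c x * unit_root N a) * cnj (c y * unit_root N b) * unit_root N t =
      c x * cnj (c y) * unit_root N (a - b + t)" for x y a b t
  proof -
    have "unit_root N (a - b + t) = unit_root N a * cnj (unit_root N b) * unit_root N t"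
      by (simp add: cnj_unit_root flip: unit_root_add)
    then show ?thesis by (simp add: mult_ac)
  qed
  have "P j * cnj (P j) * unit_root N (int j * e) =
      (\<Sum>x\<in>A. \<Sum>y\<in>A. c x * cnj (c y) * unit_root N (int j * (L x - L y + e)))" for j
  proof -
    have "P j * cnj (P j) = (\<Sum>x\<in>A. \<Sum>y\<in>A.
        (c x * unit_root N (int j * L x)) * cnj (c y * unit_root N (int j * L y)))"
      unfolding P_def cnj_sum sum_product ..
    then show ?thesis by (simp only: sum_distrib_right summand ring_distribs)
  qed
  then have "(\<Sum>j<N. P j * cnj (P j) * unit_root N (int j * e)) =
      (\<Sum>x\<in>A. \<Sum>y\<in>A. c x * cnj (c y) * (\<Sum>j<N. unit_root N (int j * (L x - L y + e))))"
    by (simp add: sum_distrib_left sum.swap[where A = "{..<N}"])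
  also have "\<dots> = of_nat N * (\<Sum>x\<in>A. \<Sum>y\<in>A. if int N dvd L x - L y + e then c x * cnj (c y) else 0)"
    unfolding sum_unit_root[OF assms(1)] sum_distrib_left by (intro sum.cong refl) auto
  finally show ?thesis .
qed

lemma sum_norm_square_trig_sum:
  fixes c :: "'a \<Rightarrow> complex" and L :: "'a \<Rightarrow> nat"
  assumes fin: "finite A" and inj: "inj_on L A" and below: "\<forall>x\<in>A. L x < N"
  shows "(\<Sum>j<N. (cmod (\<Sum>x\<in>A. c x * unit_root N (int j * int (L x))))\<^sup>2) =
         real N * (\<Sum>x\<in>A. (cmod (c x))\<^sup>2)"
proof (cases "N = 0")
  case False
  have "int N dvd int (L x) - int (L y) + 0 \<longleftrightarrow> y = x" if "x \<in> A" "y \<in> A" for x y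
    using that below[rule_format, OF that(1)] below[rule_format, OF that(2)] inj
    by (subst int_dvd_small_iff) (auto simp: inj_on_eq_iff)
  then have "(\<Sum>j<N. (\<Sum>x\<in>A. c x * unit_root N (int j * int (L x))) *
        cnj (\<Sum>x\<in>A. c x * unit_root N (int j * int (L x)))) = of_nat N * (\<Sum>x\<in>A. c x * cnj (c x))"
    using sum_unit_root_autocorrelation[of N c "\<lambda>x. int (L x)" A 0] False fin
    by (simp cong: sum.cong add: sum.delta)
  then have "complex_of_real (\<Sum>j<N. (cmod (\<Sum>x\<in>A. c x * unit_root N (int j * int (L x))))\<^sup>2) =
      complex_of_real (real N * (\<Sum>x\<in>A. (cmod (c x))\<^sup>2))"
    by (simp only: of_real_sum of_real_mult complex_norm_square of_real_of_nat_eq)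
  then show ?thesis by (simp only: of_real_eq_iff)
qed simp

lemma bounded_trig_sum_unimodular:
  fixes c :: "'a \<Rightarrow> complex" and L :: "'a \<Rightarrow> nat"
  assumes "finite A" "inj_on L A" "\<forall>x\<in>A. L x < N" and norm: "(\<Sum>x\<in>A. (cmod (c x))\<^sup>2) = 1"
    and bound: "\<And>j. cmod (\<Sum>x\<in>A. c x * unit_root N (int j * int (L x))) \<le> 1" and "j < N"
  shows "cmod (\<Sum>x\<in>A. c x * unit_root N (int j * int (L x))) = 1"
proof -
  define P where "P j = (\<Sum>x\<in>A. c x * unit_root N (int j * int (L x)))" for j
  have "(\<Sum>j<N. 1 - (cmod (P j))\<^sup>2) = 0"
    using sum_norm_square_trig_sum[OF assms(1-3), of c] norm by (simp add: P_def sum_subtractf)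
  moreover have "0 \<le> 1 - (cmod (P j))\<^sup>2" for j
    using bound[of j] by (simp add: P_def power_le_one)
  ultimately have "(cmod (P j))\<^sup>2 = 1"
    using \<open>j < N\<close> sum_nonneg_eq_0_iff[of "{..<N}" "\<lambda>j. 1 - (cmod (P j))\<^sup>2"] by simp
  then show ?thesis by (simp add: P_def abs_square_eq_1)
qed

lemma trig_sum_autocorrelation_extreme_lag:
  fixes c :: "'a \<Rightarrow> complex" and L :: "'a \<Rightarrow> nat"
  assumes fin: "finite A" and inj: "inj_on L A" and small: "\<forall>x\<in>A. 2 * L x < N"
    and xM: "xM \<in> A" "\<forall>x\<in>A. L x \<le> L xM" and ym: "ym \<in> A" "\<forall>x\<in>A. L ym \<le> L x"
  defines "P \<equiv> \<lambda>j. \<Sum>x\<in>A. c x * unit_root N (int j * int (L x))"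
    and "d \<equiv> int (L xM) - int (L ym)"
  shows "(\<Sum>j<N. P j * cnj (P j) * unit_root N (int j * - d)) = of_nat N * (c xM * cnj (c ym))"
proof -
  have N: "N > 0" using small xM(1) by fastforce
  have "int N dvd int (L x) - int (L y) + - d \<longleftrightarrow> x = xM \<and> y = ym" if "x \<in> A" "y \<in> A" for x y
  proof -
    have bounds: "L ym \<le> L x" "L x \<le> L xM" "L ym \<le> L y" "L y \<le> L xM" "2 * L xM < N"
      using that xM ym small by auto
    then have "\<bar>int (L x) - int (L y) + - d\<bar> < int N" unfolding d_def by linarith
    then have "int N dvd int (L x) - int (L y) + - d \<longleftrightarrow> int (L x) - int (L y) + - d = 0"
      by (rule int_dvd_small_iff)
    also have "\<dots> \<longleftrightarrow> L x = L xM \<and> L y = L ym" using bounds unfolding d_def by auto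
    also have "\<dots> \<longleftrightarrow> x = xM \<and> y = ym"
      using that xM(1) ym(1) inj by (auto simp: inj_on_eq_iff)
    finally show ?thesis .
  qed
  then have "(\<Sum>j<N. P j * cnj (P j) * unit_root N (int j * - d)) =
      of_nat N * (\<Sum>x\<in>A. \<Sum>y\<in>A. if x = xM \<and> y = ym then c x * cnj (c y) else 0)"
    using sum_unit_root_autocorrelation[OF N, of c "\<lambda>x. int (L x)" A "- d"]
    by (simp add: P_def cong: sum.cong)
  also have "(\<Sum>x\<in>A. \<Sum>y\<in>A. if x = xM \<and> y = ym then c x * cnj (c y) else 0) =
      (\<Sum>x\<in>A. if x = xM then c x * cnj (c ym) else 0)"
    using fin ym(1) by (intro sum.cong refl) (simp add: sum.delta')
  finally show ?thesis using fin xM(1) by (simp add: sum.delta')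
qed

text \<open>If the frequencies are not all equal, the autocorrelation at the lag between the largest and
  the smallest one is the product of the two extreme coefficients; but for a unimodular sum all
  autocorrelations at nonzero lags vanish.\<close>

lemma bounded_trig_sum_single_term:
  fixes c :: "'a \<Rightarrow> complex" and L :: "'a \<Rightarrow> nat"
  assumes fin: "finite A" and inj: "inj_on L A" and nz: "\<forall>x\<in>A. c x \<noteq> 0"
    and norm: "(\<Sum>x\<in>A. (cmod (c x))\<^sup>2) = 1" and small: "\<forall>x\<in>A. 2 * L x < N"
    and bound: "\<And>j. cmod (\<Sum>x\<in>A. c x * unit_root N (int j * int (L x))) \<le> 1"
  shows "\<exists>x. A = {x}"
proof (rule ccontr)
  assume not_single: "\<nexists>x. A = {x}"
  define P where "P j = (\<Sum>x\<in>A. c x * unit_root N (int j * int (L x)))" for j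
  obtain x0 where "x0 \<in> A" using norm by fastforce
  have below_N: "\<forall>x. x \<in> A \<longrightarrow> L x < N" using small by fastforce
  then have N: "N > 0" using \<open>x0 \<in> A\<close> by fastforce
  obtain xM where xM: "xM \<in> A" "\<forall>x\<in>A. L x \<le> L xM"
    using arg_max_nat_lemma[of "\<lambda>x. x \<in> A", OF \<open>x0 \<in> A\<close> below_N] by blast
  obtain ym where ym: "ym \<in> A" "\<forall>x\<in>A. L ym \<le> L x"
    using arg_min_nat_lemma[of "\<lambda>x. x \<in> A", OF \<open>x0 \<in> A\<close>] by blast
  define d where "d = int (L xM) - int (L ym)"
  have "d > 0"
  proof (rule ccontr)
    assume "\<not> d > 0"
    then have "L x = L xM" if "x \<in> A" for x
      using that xM ym unfolding d_def by fastforce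
    then have "A = {xM}" using inj xM(1) by (auto dest: inj_onD)
    then show False using not_single by blast
  qed
  have "d < int N" using small xM(1) unfolding d_def by fastforce
  have "P j * cnj (P j) = 1" if "j < N" for j
  proof -
    have "cmod (P j) = 1"
      unfolding P_def using bounded_trig_sum_unimodular[OF fin inj _ norm bound that] below_N by simp
    then show ?thesis by (simp flip: complex_norm_square)
  qed
  then have "(\<Sum>j<N. P j * cnj (P j) * unit_root N (int j * - d)) = (\<Sum>j<N. unit_root N (int j * - d))"
    by simp
  also have "\<dots> = 0"
    unfolding sum_unit_root[OF N] using \<open>d > 0\<close> \<open>d < int N\<close> by (simp add: int_dvd_small_iff)
  finally have "of_nat N * (c xM * cnj (c ym)) = 0"
    using trig_sum_autocorrelation_extreme_lag[OF fin inj small xM ym, of c]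
    unfolding P_def d_def by simp
  then show False using N nz xM(1) ym(1) by simp
qed

text \<open>Kronecker substitution \<open>z\<^sub>i = \<zeta> ^ B ^ k i\<close>, with \<open>k\<close> injective and \<open>B\<close> exceeding all
  exponents, maps distinct monomials to distinct powers of \<open>\<zeta>\<close>.\<close>

lemma single_term_if_torus_bounded:
  fixes p :: "'n::finite mindex \<Rightarrow> complex"
  assumes fin: "finite {\<beta>. p \<beta> \<noteq> 0}"
    and norm: "(\<Sum>\<beta> | p \<beta> \<noteq> 0. (cmod (p \<beta>))\<^sup>2) = 1"
    and bound: "\<And>w. (\<forall>i. cmod (w i) = 1) \<Longrightarrow> cmod (\<Sum>\<beta> | p \<beta> \<noteq> 0. p \<beta> * mmonom w \<beta>) \<le> 1"
  shows "\<exists>\<alpha>. {\<beta>. p \<beta> \<noteq> 0} = {\<alpha>}"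
proof -
  define A where "A = {\<beta>. p \<beta> \<noteq> 0}"
  have "finite (\<Union>\<beta>\<in>A. range \<beta>)" using fin unfolding A_def by simp
  then obtain B where B: "\<forall>\<beta>\<in>A. \<forall>i. \<beta> i < B"
    by (auto simp: finite_nat_set_iff_bounded)
  obtain k :: "'n \<Rightarrow> nat" where k: "inj k"
    using finite_imp_inj_to_nat_seg[of "UNIV :: 'n set"] by auto
  define L where "L \<beta> = (\<Sum>i\<in>UNIV. \<beta> i * B ^ k i)" for \<beta> :: "'n mindex"
  have inj: "inj_on L A"
  proof (intro inj_onI ext)
    fix \<beta> \<gamma> i assume "\<beta> \<in> A" "\<gamma> \<in> A" "L \<beta> = L \<gamma>"
    then show "\<beta> i = \<gamma> i"
      using base_expansion_inj[of UNIV k \<beta> B \<gamma> i] k B by (simp add: L_def)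
  qed
  define N where "N = Suc (2 * (\<Sum>\<beta>\<in>A. L \<beta>))"
  have small: "\<forall>\<beta>\<in>A. 2 * L \<beta> < N"
  proof
    fix \<beta> assume "\<beta> \<in> A"
    then have "L \<beta> \<le> (\<Sum>\<beta>\<in>A. L \<beta>)" using fin by (intro member_le_sum) (auto simp: A_def)
    then show "2 * L \<beta> < N" unfolding N_def by simp
  qed
  have "cmod (\<Sum>\<beta>\<in>A. p \<beta> * unit_root N (int j * int (L \<beta>))) \<le> 1" for j
  proof -
    have "cmod (\<Sum>\<beta>\<in>A. p \<beta> * mmonom (\<lambda>i. unit_root N (int j * int (B ^ k i))) \<beta>) \<le> 1"
      unfolding A_def by (rule bound) simp
    then show ?thesis unfolding mmonom_unit_root L_def .
  qed
  then show ?thesis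
    using bounded_trig_sum_single_term[OF _ inj _ _ small] fin norm unfolding A_def by blast
qed

section \<open>Homogeneous parts of Schur-class functions\<close>

definition homog_part :: "nat \<Rightarrow> ('n::finite mindex \<Rightarrow> complex) \<Rightarrow> ('n \<Rightarrow> complex) \<Rightarrow> complex" where
  "homog_part m \<phi> z = (\<Sum>\<beta> | mdeg \<beta> = m. \<phi> \<beta> * mmonom z \<beta>)"

lemma has_sum_sum:
  fixes f :: "'j \<Rightarrow> 'a \<Rightarrow> 'b::topological_comm_monoid_add"
  assumes "finite J" "\<And>j. j \<in> J \<Longrightarrow> (f j has_sum s j) S"
  shows "((\<lambda>x. \<Sum>j\<in>J. f j x) has_sum (\<Sum>j\<in>J. s j)) S"
  using assms by (induction J rule: finite_induct) (auto intro: has_sum_add)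

lemma schur_class_summable:
  "schur_class \<phi> \<Longrightarrow> z \<in> polydisc \<Longrightarrow> (\<lambda>\<beta>. \<phi> \<beta> * mmonom z \<beta>) summable_on UNIV"
  unfolding schur_class_def by (auto intro: abs_summable_summable)

lemma average_rotated_mmonom:
  assumes "N > 0"
  shows "(\<Sum>j<N. unit_root N (- (int j * int m)) / of_nat N * mmonom (\<lambda>i. unit_root N (int j) * z i) \<beta>) =
         (if int N dvd int (mdeg \<beta>) - int m then mmonom z \<beta> else 0)"
proof -
  have "unit_root N (- (int j * int m)) / of_nat N * mmonom (\<lambda>i. unit_root N (int j) * z i) \<beta> =
      mmonom z \<beta> / of_nat N * unit_root N (int j * (int (mdeg \<beta>) - int m))" for j
  proof -
    have "unit_root N (int j * (int (mdeg \<beta>) - int m)) =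
        unit_root N (int (mdeg \<beta>) * int j) * unit_root N (- (int j * int m))"
      by (simp add: algebra_simps flip: unit_root_add)
    then show ?thesis unfolding mmonom_scale unit_root_power by (simp add: mult_ac)
  qed
  then have "(\<Sum>j<N. unit_root N (- (int j * int m)) / of_nat N * mmonom (\<lambda>i. unit_root N (int j) * z i) \<beta>) =
      mmonom z \<beta> / of_nat N * (\<Sum>j<N. unit_root N (int j * (int (mdeg \<beta>) - int m)))"
    by (simp only: sum_distrib_left)
  then show ?thesis using assms by (simp add: sum_unit_root)
qed

text \<open>The filtered series is the average of \<open>\<zeta>\<^bsup>-jm\<^esup> \<phi>(\<zeta>\<^sup>j z)\<close> over the \<open>N\<close>-th roots of
  unity \<open>\<zeta>\<^sup>j\<close>.\<close>

lemma schur_class_degree_filter_bound: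
  fixes \<phi> :: "'n::finite mindex \<Rightarrow> complex"
  assumes schur: "schur_class \<phi>" and z: "z \<in> polydisc" and N: "N > 0"
  shows "cmod (\<Sum>\<^sub>\<infinity>\<beta>. if int N dvd int (mdeg \<beta>) - int m then \<phi> \<beta> * mmonom z \<beta> else 0) \<le> 1"
proof -
  define z' where "z' j = (\<lambda>i. unit_root N (int j) * z i)" for j
  define c where "c j = unit_root N (- (int j * int m)) / of_nat N" for j
  have z': "z' j \<in> polydisc" for j
    using z by (simp add: z'_def polydisc_def norm_mult)
  have "((\<lambda>\<beta>. \<phi> \<beta> * mmonom (z' j) \<beta>) has_sum (\<Sum>\<^sub>\<infinity>\<beta>. \<phi> \<beta> * mmonom (z' j) \<beta>)) UNIV" for j
    using schur_class_summable[OF schur z'] by (rule has_sum_infsum)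
  then have "((\<lambda>\<beta>. \<Sum>j<N. c j * (\<phi> \<beta> * mmonom (z' j) \<beta>)) has_sum
      (\<Sum>j<N. c j * (\<Sum>\<^sub>\<infinity>\<beta>. \<phi> \<beta> * mmonom (z' j) \<beta>))) UNIV"
    by (intro has_sum_sum has_sum_cmult_right) simp_all
  moreover have "(\<Sum>j<N. c j * (\<phi> \<beta> * mmonom (z' j) \<beta>)) =
      (if int N dvd int (mdeg \<beta>) - int m then \<phi> \<beta> * mmonom z \<beta> else 0)" for \<beta>
  proof -
    have "(\<Sum>j<N. c j * (\<phi> \<beta> * mmonom (z' j) \<beta>)) = \<phi> \<beta> * (\<Sum>j<N. c j * mmonom (z' j) \<beta>)"
      by (simp add: sum_distrib_left mult.left_commute)
    then show ?thesis unfolding c_def z'_def average_rotated_mmonom[OF N] by simp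
  qed
  ultimately have "(\<Sum>\<^sub>\<infinity>\<beta>. if int N dvd int (mdeg \<beta>) - int m then \<phi> \<beta> * mmonom z \<beta> else 0) =
      (\<Sum>j<N. c j * (\<Sum>\<^sub>\<infinity>\<beta>. \<phi> \<beta> * mmonom (z' j) \<beta>))"
    by (simp add: infsumI)
  also have "cmod \<dots> \<le> (\<Sum>j<N. 1 / real N)"
  proof (intro order.trans[OF norm_sum] sum_mono)
    fix j
    have "cmod (\<Sum>\<^sub>\<infinity>\<beta>. \<phi> \<beta> * mmonom (z' j) \<beta>) \<le> 1"
      using schur z' unfolding schur_class_def by blast
    then show "cmod (c j * (\<Sum>\<^sub>\<infinity>\<beta>. \<phi> \<beta> * mmonom (z' j) \<beta>)) \<le> 1 / real N"
      using N by (simp add: c_def norm_mult norm_divide divide_right_mono)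
  qed
  also have "\<dots> = 1" using N by simp
  finally show ?thesis .
qed

lemma norm_infsum_le_dominating:
  fixes f g :: "'a \<Rightarrow> 'b::banach"
  assumes summable: "(\<lambda>x. norm (f x)) summable_on UNIV"
    and vanish: "\<And>x. x \<notin> S \<Longrightarrow> g x = 0" and dominated: "\<And>x. norm (g x) \<le> norm (f x)"
  shows "norm (infsum g UNIV) \<le> (\<Sum>\<^sub>\<infinity>x\<in>S. norm (f x))"
proof -
  have f_summable: "(\<lambda>x. norm (f x)) summable_on S"
    using summable by (rule summable_on_subset_banach) simp
  have g_summable: "(\<lambda>x. norm (g x)) summable_on S"
    using f_summable dominated by (rule summable_on_comparison_test) simp
  have "infsum g UNIV = infsum g S"
    using vanish by (intro infsum_cong_neutral) auto
  also have "norm \<dots> \<le> (\<Sum>\<^sub>\<infinity>x\<in>S. norm (g x))"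
    using g_summable by (rule norm_infsum_bound)
  also have "\<dots> \<le> (\<Sum>\<^sub>\<infinity>x\<in>S. norm (f x))"
    using g_summable f_summable dominated by (rule infsum_mono)
  finally show ?thesis .
qed

lemma infsum_mdeg_tail_le:
  fixes a :: "'n::finite mindex \<Rightarrow> real"
  assumes summable: "a summable_on UNIV" and nonneg: "\<And>\<beta>. 0 \<le> a \<beta>" and "\<epsilon> > 0"
  obtains N0 where "\<And>N. N0 \<le> N \<Longrightarrow> infsum a {\<beta>. N \<le> mdeg \<beta>} \<le> \<epsilon>"
proof -
  obtain F where F: "finite F" "dist (sum a F) (infsum a UNIV) \<le> \<epsilon>"
    using infsum_finite_approximation[OF summable \<open>\<epsilon> > 0\<close>] by auto
  have "infsum a {\<beta>. N \<le> mdeg \<beta>} \<le> \<epsilon>" if N: "Suc (\<Sum>\<beta>\<in>F. mdeg \<beta>) \<le> N" for N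
  proof -
    let ?Y = "{\<beta>. mdeg \<beta> < N}"
    have "F \<subseteq> ?Y"
      using F(1) N member_le_sum[of _ F mdeg] by fastforce
    then have "sum a F \<le> sum a ?Y"
      using nonneg by (intro sum_mono2 finite_mdeg_less) auto
    moreover have "infsum a UNIV = sum a ?Y + infsum a {\<beta>. N \<le> mdeg \<beta>}"
    proof -
      have "infsum a UNIV = infsum a (?Y \<union> {\<beta>. N \<le> mdeg \<beta>})"
        by (rule arg_cong[of _ _ "infsum a"]) auto
      also have "\<dots> = infsum a ?Y + infsum a {\<beta>. N \<le> mdeg \<beta>}"
        by (intro infsum_Un_disjoint summable_on_subset_banach[OF summable]) auto
      finally show ?thesis by (simp add: finite_mdeg_less)
    qed
    moreover have "infsum a UNIV - sum a F \<le> \<epsilon>" using F(2) by (simp add: dist_real_def)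
    ultimately show ?thesis by linarith
  qed
  then show ?thesis using that by blast
qed

text \<open>The degree filter of \<open>schur_class_degree_filter_bound\<close> with \<open>N > m\<close> differs from the
  homogeneous part only by terms of degree \<open>\<ge> N\<close>, whose contribution is a tail of an absolutely
  convergent series.\<close>

lemma schur_class_homog_part_bound_polydisc:
  fixes \<phi> :: "'n::finite mindex \<Rightarrow> complex"
  assumes schur: "schur_class \<phi>" and z: "z \<in> polydisc"
  shows "cmod (homog_part m \<phi> z) \<le> 1"
proof (rule field_le_epsilon)
  fix \<epsilon> :: real assume "0 < \<epsilon>"
  define f where "f \<beta> = \<phi> \<beta> * mmonom z \<beta>" for \<beta>
  have abs_summable: "(\<lambda>\<beta>. cmod (f \<beta>)) summable_on UNIV"
    using schur z unfolding schur_class_def f_def by blast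
  obtain N0 where tail: "\<And>N. N0 \<le> N \<Longrightarrow> (\<Sum>\<^sub>\<infinity>\<beta>\<in>{\<beta>. N \<le> mdeg \<beta>}. cmod (f \<beta>)) \<le> \<epsilon>"
    using infsum_mdeg_tail_le[OF abs_summable _ \<open>0 < \<epsilon>\<close>] by auto
  define N where "N = max N0 (Suc m)"
  have restrict_summable: "(\<lambda>\<beta>. if P \<beta> then f \<beta> else 0) summable_on S" for P S
    by (rule abs_summable_summable, rule summable_on_comparison_test
        [OF summable_on_subset_banach[OF abs_summable subset_UNIV]]) auto
  define h where "h \<beta> = (if mdeg \<beta> = m then f \<beta> else 0)" for \<beta>
  define r where "r \<beta> = (if int N dvd int (mdeg \<beta>) - int m \<and> mdeg \<beta> \<noteq> m then f \<beta> else 0)" for \<beta>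
  have "(\<Sum>\<^sub>\<infinity>\<beta>. if int N dvd int (mdeg \<beta>) - int m then f \<beta> else 0) = (\<Sum>\<^sub>\<infinity>\<beta>. h \<beta> + r \<beta>)"
    unfolding h_def r_def by (intro infsum_cong) auto
  also have "\<dots> = infsum h UNIV + infsum r UNIV"
    unfolding h_def r_def by (intro infsum_add restrict_summable)
  also have "infsum h UNIV = homog_part m \<phi> z"
  proof -
    have "infsum h UNIV = (\<Sum>\<^sub>\<infinity>\<beta>\<in>{\<beta>. mdeg \<beta> = m}. f \<beta>)"
      unfolding h_def by (intro infsum_cong_neutral) auto
    then show ?thesis by (simp add: finite_mdeg_eq homog_part_def f_def)
  qed
  finally have "homog_part m \<phi> z =
      (\<Sum>\<^sub>\<infinity>\<beta>. if int N dvd int (mdeg \<beta>) - int m then f \<beta> else 0) - infsum r UNIV"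
    by (simp add: eq_diff_eq)
  then have "cmod (homog_part m \<phi> z) \<le>
      cmod (\<Sum>\<^sub>\<infinity>\<beta>. if int N dvd int (mdeg \<beta>) - int m then f \<beta> else 0) + cmod (infsum r UNIV)"
    by (simp only: norm_triangle_ineq4)
  also have "\<dots> \<le> 1 + cmod (infsum r UNIV)"
    using schur_class_degree_filter_bound[OF schur z, of N m] unfolding f_def N_def by simp
  moreover have "cmod (infsum r UNIV) \<le> \<epsilon>"
  proof -
    have r0: "r \<beta> = 0" if "mdeg \<beta> < N" for \<beta>
      using that int_dvd_small_iff[of "int (mdeg \<beta>) - int m" N] unfolding r_def N_def by auto
    have "cmod (infsum r UNIV) \<le> (\<Sum>\<^sub>\<infinity>\<beta>\<in>{\<beta>. N \<le> mdeg \<beta>}. cmod (f \<beta>))"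
      by (intro norm_infsum_le_dominating[OF abs_summable]) (auto simp: r0 not_le, simp add: r_def)
    also have "\<dots> \<le> \<epsilon>" by (rule tail) (simp add: N_def)
    finally show ?thesis .
  qed
  ultimately show "cmod (homog_part m \<phi> z) \<le> 1 + \<epsilon>" by simp
qed

lemma homog_part_scale: "homog_part m \<phi> (\<lambda>i. c * w i) = c ^ m * homog_part m \<phi> w"
  unfolding homog_part_def sum_distrib_left by (intro sum.cong refl) (simp add: mmonom_scale)

lemma schur_class_homog_part_bound:
  fixes \<phi> :: "'n::finite mindex \<Rightarrow> complex"
  assumes schur: "schur_class \<phi>" and w: "\<forall>i. cmod (w i) \<le> 1"
  shows "cmod (homog_part m \<phi> w) \<le> 1"
proof (rule tendsto_upperbound)
  show "((\<lambda>r. r ^ m * cmod (homog_part m \<phi> w)) \<longlongrightarrow> cmod (homog_part m \<phi> w)) (at_left 1)"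
    by (auto intro!: tendsto_eq_intros)
  have "r ^ m * cmod (homog_part m \<phi> w) \<le> 1" if "r \<in> {0<..<1}" for r :: real
  proof -
    have "(\<lambda>i. complex_of_real r * w i) \<in> polydisc"
      using that w by (auto simp: polydisc_def norm_mult intro: le_less_trans[OF mult_left_le])
    from schur_class_homog_part_bound_polydisc[OF schur this, of m]
    show ?thesis using that by (simp add: homog_part_scale norm_mult norm_power)
  qed
  then show "\<forall>\<^sub>F r in at_left 1. r ^ m * cmod (homog_part m \<phi> w) \<le> 1"
    using eventually_at_left_real[of 0 "1::real"] by (auto elim: eventually_mono)
qed simp

lemma schur_class_monomial:
  assumes "cmod u \<le> 1"
  shows "schur_class (\<lambda>\<beta>. u * monomial_coeffs \<alpha> \<beta>)"
  unfolding schur_class_def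
proof (intro ballI conjI)
  fix z :: "'a \<Rightarrow> complex" assume z: "z \<in> polydisc"
  have "(\<lambda>\<beta>. cmod (u * monomial_coeffs \<alpha> \<beta> * mmonom z \<beta>)) summable_on UNIV \<longleftrightarrow>
      (\<lambda>\<beta>. cmod (u * monomial_coeffs \<alpha> \<beta> * mmonom z \<beta>)) summable_on {\<alpha>}"
    by (rule summable_on_cong_neutral) (auto simp: monomial_coeffs_def)
  then show "(\<lambda>\<beta>. cmod (u * monomial_coeffs \<alpha> \<beta> * mmonom z \<beta>)) summable_on UNIV" by simp
  have "(\<Sum>\<^sub>\<infinity>\<beta>. u * monomial_coeffs \<alpha> \<beta> * mmonom z \<beta>) = (\<Sum>\<^sub>\<infinity>\<beta>\<in>{\<alpha>}. u * monomial_coeffs \<alpha> \<beta> * mmonom z \<beta>)"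
    by (rule infsum_cong_neutral) (auto simp: monomial_coeffs_def)
  then show "cmod (\<Sum>\<^sub>\<infinity>\<beta>. u * monomial_coeffs \<alpha> \<beta> * mmonom z \<beta>) \<le> 1"
    using assms norm_mmonom_polydisc_le[OF z, of \<alpha>]
    by (simp add: monomial_coeffs_def norm_mult mult_le_one)
qed

section \<open>Lifts of the compressed multiplication operator\<close>

lemma mult_coeffs_one:
  fixes c :: "'n::finite mindex \<Rightarrow> complex"
  shows "mult_coeffs c (monomial_coeffs (\<lambda>_. 0)) = c"
proof
  fix \<beta> :: "'n mindex"
  have "mult_coeffs c (monomial_coeffs (\<lambda>_. 0)) \<beta> = (\<Sum>\<alpha>\<in>{\<alpha>. \<forall>i. \<alpha> i \<le> \<beta> i}. if \<alpha> = \<beta> then c \<alpha> else 0)"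
    unfolding mult_coeffs_def monomial_coeffs_def
    by (intro sum.cong refl) (auto simp: fun_eq_iff intro: antisym)
  also have "\<dots> = c \<beta>"
  proof -
    have "finite {\<alpha>. \<forall>i. \<alpha> i \<le> \<beta> i}"
      by (rule finite_subset[OF _ finite_mdeg_less[of "Suc (mdeg \<beta>)"]])
        (auto simp: mdeg_def le_imp_less_Suc sum_mono)
    then show ?thesis by (simp add: sum.delta)
  qed
  finally show "mult_coeffs c (monomial_coeffs (\<lambda>_. 0)) \<beta> = c \<beta>" .
qed

lemma compress_eq_imp_coeffs_eq:
  assumes "\<forall>q\<in>Qspace m. compress m \<phi> q = compress m \<psi> q" and "mdeg \<beta> \<le> m"
  shows "\<phi> \<beta> = \<psi> \<beta>"
proof -
  have "monomial_coeffs (\<lambda>_. 0) \<in> Qspace m"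
    by (simp add: Qspace_def monomial_coeffs_def mdeg_def)
  then have "compress m \<phi> (monomial_coeffs (\<lambda>_. 0)) = compress m \<psi> (monomial_coeffs (\<lambda>_. 0))"
    using assms(1) by blast
  then have "proj_Q m \<phi> \<beta> = proj_Q m \<psi> \<beta>"
    by (simp add: compress_def mult_coeffs_one)
  then show ?thesis
    using assms(2) by (simp add: proj_Q_def)
qed

lemma finite_support_homog: "p \<in> homog m \<Longrightarrow> finite {\<beta>. p \<beta> \<noteq> 0}"
  unfolding homog_def by (rule finite_subset[OF _ finite_mdeg_eq[of m]]) auto

lemma homog_part_homog:
  assumes "p \<in> homog m"
  shows "homog_part m p w = (\<Sum>\<beta> | p \<beta> \<noteq> 0. p \<beta> * mmonom w \<beta>)"
  unfolding homog_part_def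
  using assms finite_mdeg_eq by (intro sum.mono_neutral_right) (auto simp: homog_def)

lemma h2norm_finite_support:
  assumes "finite {\<beta>. p \<beta> \<noteq> 0}"
  shows "h2norm p = sqrt (\<Sum>\<beta> | p \<beta> \<noteq> 0. (cmod (p \<beta>))\<^sup>2)"
proof -
  have "(\<Sum>\<^sub>\<infinity>\<beta>. (cmod (p \<beta>))\<^sup>2) = (\<Sum>\<^sub>\<infinity>\<beta>\<in>{\<beta>. p \<beta> \<noteq> 0}. (cmod (p \<beta>))\<^sup>2)"
    by (rule infsum_cong_neutral) auto
  then show ?thesis using assms by (simp add: h2norm_def)
qed

theorem theorem3p2:
  fixes m :: nat and p :: "'n::finite mindex \<Rightarrow> complex"
  assumes "p \<in> homog m" and "h2norm p = 1"
  shows "(\<exists>\<phi>. schur_class \<phi> \<and> (\<forall>q\<in>Qspace m. compress m \<phi> q = compress m p q))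
         \<longleftrightarrow> (\<exists>u \<alpha>. cmod u = 1 \<and> p = (\<lambda>\<beta>. u * monomial_coeffs \<alpha> \<beta>))"
proof
  assume "\<exists>\<phi>. schur_class \<phi> \<and> (\<forall>q\<in>Qspace m. compress m \<phi> q = compress m p q)"
  then obtain \<phi> where schur: "schur_class \<phi>" and lift: "\<forall>q\<in>Qspace m. compress m \<phi> q = compress m p q"
    by blast
  have "homog_part m \<phi> w = homog_part m p w" for w
    unfolding homog_part_def using compress_eq_imp_coeffs_eq[OF lift] by (intro sum.cong) auto
  then have bound: "cmod (\<Sum>\<beta> | p \<beta> \<noteq> 0. p \<beta> * mmonom w \<beta>) \<le> 1" if "\<forall>i. cmod (w i) = 1" for w
    using schur_class_homog_part_bound[OF schur, of w m] that homog_part_homog[OF assms(1)] by simp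
  have fin: "finite {\<beta>. p \<beta> \<noteq> 0}" using assms(1) by (rule finite_support_homog)
  have norm: "(\<Sum>\<beta> | p \<beta> \<noteq> 0. (cmod (p \<beta>))\<^sup>2) = 1"
    using assms(2) by (simp add: h2norm_finite_support[OF fin])
  obtain \<alpha> where \<alpha>: "{\<beta>. p \<beta> \<noteq> 0} = {\<alpha>}"
    using single_term_if_torus_bounded[OF fin norm bound] by blast
  then have "p = (\<lambda>\<beta>. p \<alpha> * monomial_coeffs \<alpha> \<beta>)"
    by (auto simp: fun_eq_iff monomial_coeffs_def)
  moreover have "cmod (p \<alpha>) = 1" using norm by (simp add: \<alpha> abs_square_eq_1)
  ultimately show "\<exists>u \<alpha>. cmod u = 1 \<and> p = (\<lambda>\<beta>. u * monomial_coeffs \<alpha> \<beta>)" by blast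
next
  assume "\<exists>u \<alpha>. cmod u = 1 \<and> p = (\<lambda>\<beta>. u * monomial_coeffs \<alpha> \<beta>)"
  then obtain u \<alpha> where "cmod u = 1" "p = (\<lambda>\<beta>. u * monomial_coeffs \<alpha> \<beta>)" by blast
  then have "schur_class p" using schur_class_monomial[of u \<alpha>] by simp
  then show "\<exists>\<phi>. schur_class \<phi> \<and> (\<forall>q\<in>Qspace m. compress m \<phi> q = compress m p q)" by blast
qed

end
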